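(* Let $\mathcal H$ be a real Hilbert space, $t_0>0$, let $f\in\mathcal C^2(\mathcal H)$ be convex with $S:=\operatorname{argmin}_{\mathcal H}f\neq\emptyset$, and let $e\in\mathcal C^1([t_0,+\infty[,\mathcal H)$ satisfy $\int_{t_0}^{+\infty}t\|e(t)\|dt<+\infty$ and $\int_{t_0}^{+\infty}t\|\dot e(t)\|dt<+\infty$. Let $\alpha>3$ and $\beta>0$. Then for any solution trajectory $x$ of $$\ddot x(t)+\frac{\alpha}{t}\dot x(t)+\beta\frac{d}{dt}\big(\nabla f(x(t))+e(t)\big)+\nabla f(x(t))+e(t)=0$$ the following hold: (i) $f(x(t))-\inf_{\mathcal H}f=o(1/t^2)$ as $t\to+\infty$; (ii) $\int_{t_0}^{+\infty}t^2\|\nabla f(x(t))\|^2dt<+\infty$; (iii) $\int_{t_0}^{+\infty}t\,(f(x(t))-\min_{\mathcal H}f)dt<+\infty$; (iv) for any $x^\star\in S$, $\int_{t_0}^{+\infty}t\langle\nabla f(x(t)),x(t)-x^\star\rangle dt<+\infty$; (v) $\int_{t_0}^{+\infty}t\|\dot x(t)\|^2dt<+\infty$; (vi) $\|\dot x(t)\|=o(1/t)$ as $t\to+\infty$. *)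

theory Defs
  imports "HOL-Analysis.Analysis"
begin

end

theory Submission
  imports Defs
begin

text \<open>
  Fix a minimizer xs and let p = x - xs, v = x' + beta (gf x + e), lam = (alpha + 1) / 2. Along the
  dynamics the energy E t = t (t - gamma) (f (x t) - f xs) + ||lam p + t v||^2 / 2 + xi / 2 ||p||^2,
  where gamma = beta (alpha - lam) > 0 and xi = lam (alpha - 1 - lam) > 0 because alpha > 3, satisfies
  E' + P <= c t ||e|| + K t ||e|| sqrt E for large t, with a dissipation P that dominates
  t <gf x, p>, t ||v||^2 and t^2 ||gf x||^2. Since t ||e|| is integrable, a Gronwall argument for
  sqrt E bounds E, and then P is integrable; this gives the integrability statements.
  The energy W = t^2 (f x - f xs) + t^2 ||x'||^2 / 2 satisfies a differential inequality of the same
  kind, so it is bounded and its increments are dominated by an integrable function; as W t / t is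
  integrable as well, W t tends to 0, which gives both little-o rates.
\<close>

section \<open>Integrals on half-lines\<close>

lemma nonneg_integrable_on_atLeast:
  fixes f :: "real \<Rightarrow> real"
  assumes cont: "continuous_on {T..} f" and nonneg: "\<And>t. t \<ge> T \<Longrightarrow> 0 \<le> f t"
    and bounded: "\<And>t. t \<ge> T \<Longrightarrow> integral {T..t} f \<le> B"
  shows "f integrable_on {T..}"
proof -
  define I where "I y = integral {T..y} f" for y
  have f_int: "f integrable_on {T..y}" for y
    by (intro integrable_continuous_real continuous_on_subset[OF cont]) auto
  have mono: "I y \<le> I z" if "y \<le> z" for y z
    unfolding I_def using that by (intro integral_subset_le f_int) (auto intro: nonneg)
  have bdd: "bdd_above (range I)"
  proof (rule bdd_aboveI2)
    show "I y \<le> max B 0" for y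
      by (cases "y \<ge> T") (auto simp: I_def bounded intro: le_max_iff_disj[THEN iffD2])
  qed
  have "(I \<longlongrightarrow> (SUP y. I y)) at_top"
  proof (rule increasing_tendsto)
    show "\<forall>\<^sub>F y in at_top. I y \<le> (SUP y. I y)" by (intro always_eventually allI cSUP_upper[OF _ bdd]) simp
    show "\<forall>\<^sub>F y in at_top. l < I y" if l: "l < (SUP y. I y)" for l
    proof -
      obtain y where "l < I y" using l less_cSUP_iff[OF _ bdd] by auto
      then show ?thesis
        unfolding eventually_at_top_linorder using mono less_le_trans by blast
    qed
  qed
  then show ?thesis
    unfolding I_def by (intro has_integral_integrable[OF has_integral_to_inf] f_int nonneg)
qed

lemma integrable_on_atLeast_dominated:
  fixes h g :: "real \<Rightarrow> real"
  assumes "continuous_on {T..} h" "\<And>t. t \<ge> T \<Longrightarrow> 0 \<le> h t"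
    and "\<And>t. t \<ge> T \<Longrightarrow> h t \<le> g t" and "g integrable_on {T..}"
  shows "h integrable_on {T..}"
proof (rule measurable_bounded_by_integrable_imp_integrable_real)
  show "h \<in> borel_measurable (lebesgue_on {T..})"
    by (rule continuous_imp_measurable_on_sets_lebesgue[OF assms(1)]) simp
qed (use assms in auto)

lemma nonneg_integrable_on_atLeast_subset:
  fixes h :: "real \<Rightarrow> real"
  assumes "continuous_on {T..} h" "\<And>t. t \<ge> T \<Longrightarrow> 0 \<le> h t" "h integrable_on {T..}"
    and "T \<le> S"
  shows "h integrable_on {S..}"
proof (rule nonneg_integrable_on_atLeast)
  show "continuous_on {S..} h" using assms by (auto intro: continuous_on_subset)
  show "integral {S..t} h \<le> integral {T..} h" if "t \<ge> S" for t
    using assms that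
    by (intro integral_subset_le integrable_on_subinterval[OF assms(3)]) auto
qed (use assms in auto)

lemma integrable_on_atLeast_extend:
  fixes h :: "real \<Rightarrow> 'b::banach"
  assumes "continuous_on {T..} h" "h integrable_on {S..}" "T \<le> S"
  shows "h integrable_on {T..}"
proof -
  have "h integrable_on ({T..S} \<union> {S..})"
  proof (rule integrable_Un)
    have "{T..S} \<inter> {S..} = {S}" using assms(3) by auto
    then show "negligible ({T..S} \<inter> {S..})" by simp
    show "h integrable_on {T..S}"
      using assms by (intro integrable_continuous_real) (auto intro: continuous_on_subset)
  qed (rule assms(2))
  moreover have "{T..S} \<union> {S..} = {T..}" using assms(3) by auto
  ultimately show ?thesis by simp
qed

lemma le_add_integral_of_derivative_le:
  fixes E E' k :: "real \<Rightarrow> real"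
  assumes deriv: "\<And>t. t \<ge> T \<Longrightarrow> (E has_vector_derivative E' t) (at t within {T..})"
    and le: "\<And>t. t \<ge> T \<Longrightarrow> E' t \<le> k t" and k: "continuous_on {T..} k"
    and st: "T \<le> s" "s \<le> t"
  shows "E t \<le> E s + integral {s..t} k"
proof -
  have "(E' has_integral (E t - E s)) {s..t}"
    by (rule fundamental_theorem_of_calculus[OF st(2)])
       (use st in \<open>auto intro: has_vector_derivative_within_subset[OF deriv]\<close>)
  moreover have "k integrable_on {s..t}"
    using st by (intro integrable_continuous_real continuous_on_subset[OF k]) auto
  ultimately have "E t - E s \<le> integral {s..t} k"
    using st by (intro has_integral_le[OF _ integrable_integral]) (auto intro: le)
  then show ?thesis by simp
qed

lemma norm_diff_le_integral_of_norm_derivative_le: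
  fixes f :: "real \<Rightarrow> 'a::real_inner"
  assumes ab: "a \<le> b"
    and deriv: "\<And>s. s \<in> {a..b} \<Longrightarrow> (f has_vector_derivative f' s) (at s within {a..b})"
    and le: "\<And>s. s \<in> {a..b} \<Longrightarrow> norm (f' s) \<le> g s" and g: "g integrable_on {a..b}"
  shows "norm (f b - f a) \<le> integral {a..b} g"
proof -
  \<comment> \<open>'a is not assumed complete, so the vector-valued fundamental theorem of calculus is not
    available; the real-valued one is applied to the projection onto u instead\<close>
  define u where "u = f b - f a"
  have "((\<lambda>s. f s \<bullet> u) has_vector_derivative f' s \<bullet> u) (at s within {a..b})"
    if "s \<in> {a..b}" for s
    using bounded_bilinear.has_vector_derivative[OF bounded_bilinear_inner deriv[OF that]
        has_vector_derivative_const[of u]] by simp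
  from fundamental_theorem_of_calculus[OF ab this]
  have "((\<lambda>s. f' s \<bullet> u) has_integral (u \<bullet> u)) {a..b}"
    by (simp add: u_def inner_diff_left)
  moreover have "((\<lambda>s. g s * norm u) has_integral integral {a..b} g * norm u) {a..b}"
    using has_integral_mult_left[OF integrable_integral[OF g]] .
  moreover have "f' s \<bullet> u \<le> g s * norm u" if "s \<in> {a..b}" for s
    using norm_cauchy_schwarz[of "f' s" u] mult_right_mono[OF le[OF that] norm_ge_zero[of u]]
    by linarith
  ultimately have "u \<bullet> u \<le> integral {a..b} g * norm u"
    by (rule has_integral_le)
  then have "norm u * norm u \<le> integral {a..b} g * norm u"
    by (metis power2_eq_square power2_norm_eq_inner)
  moreover have "0 \<le> integral {a..b} g"
    using le by (intro integral_nonneg g) (meson norm_ge_zero order_trans)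
  ultimately have "norm u \<le> integral {a..b} g"
    by (cases "u = 0") (simp_all add: mult_le_cancel_right)
  then show ?thesis by (simp add: u_def)
qed

lemma le_add_sqrt_if_square_le:
  fixes y K A :: real
  assumes "0 \<le> y" "0 \<le> K" "0 \<le> A" "y\<^sup>2 \<le> K + A * y"
  shows "y \<le> A + sqrt K"
proof (rule ccontr)
  assume "\<not> ?thesis"
  then have "(A + sqrt K) * sqrt K < y * (y - A)"
    using assms by (intro mult_strict_mono') auto
  moreover have "K \<le> (A + sqrt K) * sqrt K"
    using assms by (simp add: distrib_right)
  ultimately show False
    using assms(4) by (simp add: power2_eq_square algebra_simps)
qed

lemma sqrt_differential_inequality_integrated:
  fixes E E' g h :: "real \<Rightarrow> real"
  assumes deriv: "\<And>t. t \<ge> T \<Longrightarrow> (E has_vector_derivative E' t) (at t within {T..})"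
    and E_nonneg: "\<And>t. t \<ge> T \<Longrightarrow> 0 \<le> E t"
    and g: "continuous_on {T..} g" "\<And>t. t \<ge> T \<Longrightarrow> 0 \<le> g t" "g integrable_on {T..}"
    and h: "continuous_on {T..} h" "\<And>t. t \<ge> T \<Longrightarrow> 0 \<le> h t" "h integrable_on {T..}"
    and le: "\<And>t. t \<ge> T \<Longrightarrow> E' t \<le> g t + h t * sqrt (E t)"
    and t: "T \<le> t" and M: "\<And>s. s \<in> {T..t} \<Longrightarrow> E s \<le> M"
  shows "E t \<le> E T + integral {T..} g + integral {T..} h * sqrt M"
proof -
  have E_cont: "continuous_on {T..} E"
    by (rule continuous_on_vector_derivative) (use deriv in auto)
  have hE_cont: "continuous_on {T..} (\<lambda>s. h s * sqrt (E s))"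
    by (intro continuous_intros h(1) E_cont)
  have subint: "f integrable_on {T..t}" if "continuous_on {T..} f" for f :: "real \<Rightarrow> real"
    by (intro integrable_continuous_real continuous_on_subset[OF that]) auto
  have "E t \<le> E T + integral {T..t} (\<lambda>s. g s + h s * sqrt (E s))"
    by (intro le_add_integral_of_derivative_le[OF deriv le _ order_refl t] continuous_on_add g(1) hE_cont)
  also have "\<dots> = E T + integral {T..t} g + integral {T..t} (\<lambda>s. h s * sqrt (E s))"
    using integral_add[OF subint[OF g(1)] subint[OF hE_cont]] by simp
  also have "integral {T..t} g \<le> integral {T..} g"
    by (intro integral_subset_le subint g(1,3)) (auto intro: g(2))
  also have "integral {T..t} (\<lambda>s. h s * sqrt (E s)) \<le> integral {T..t} (\<lambda>s. h s * sqrt M)"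
  proof (intro integral_le subint hE_cont)
    show "continuous_on {T..} (\<lambda>s. h s * sqrt M)" by (intro continuous_intros h(1))
    show "h s * sqrt (E s) \<le> h s * sqrt M" if "s \<in> {T..t}" for s
      using M[OF that] h(2)[of s] that by (intro mult_left_mono) auto
  qed
  also have "\<dots> = integral {T..t} h * sqrt M" by simp
  also have "\<dots> \<le> integral {T..} h * sqrt M"
    using M[of t] E_nonneg[of t] t
    by (intro mult_right_mono integral_subset_le subint h(1,3)) (auto intro: h(2))
  finally show ?thesis by simp
qed

lemma bounded_if_sqrt_differential_inequality:
  fixes E E' g h :: "real \<Rightarrow> real"
  assumes deriv: "\<And>t. t \<ge> T \<Longrightarrow> (E has_vector_derivative E' t) (at t within {T..})"
    and E_nonneg: "\<And>t. t \<ge> T \<Longrightarrow> 0 \<le> E t"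
    and g: "continuous_on {T..} g" "\<And>t. t \<ge> T \<Longrightarrow> 0 \<le> g t" "g integrable_on {T..}"
    and h: "continuous_on {T..} h" "\<And>t. t \<ge> T \<Longrightarrow> 0 \<le> h t" "h integrable_on {T..}"
    and le: "\<And>t. t \<ge> T \<Longrightarrow> E' t \<le> g t + h t * sqrt (E t)"
  shows "\<exists>M. \<forall>t\<ge>T. E t \<le> M"
proof -
  define K where "K = E T + integral {T..} g"
  define H where "H = integral {T..} h"
  have K: "0 \<le> K"
    unfolding K_def using E_nonneg[of T] by (intro add_nonneg_nonneg integral_nonneg g(3)) (auto intro: g(2))
  have H: "0 \<le> H"
    unfolding H_def by (intro integral_nonneg h(3)) (auto intro: h(2))
  have "E t \<le> (H + sqrt K)\<^sup>2" if t: "T \<le> t" for t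
  proof -
    have E_cont: "continuous_on {T..} E"
      by (rule continuous_on_vector_derivative) (use deriv in auto)
    have "\<exists>s\<in>{T..t}. \<forall>r\<in>{T..t}. E r \<le> E s"
      using t by (intro continuous_attains_sup continuous_on_subset[OF E_cont]) auto
    then obtain s where s: "s \<in> {T..t}" and s_max: "\<And>r. r \<in> {T..t} \<Longrightarrow> E r \<le> E s"
      by blast
    have Es: "0 \<le> E s" using s by (intro E_nonneg) auto
    \<comment> \<open>at a maximum point s of E on [T, t] the integrated inequality is quadratic in sqrt (E s)\<close>
    have "(sqrt (E s))\<^sup>2 \<le> K + H * sqrt (E s)"
      using sqrt_differential_inequality_integrated[OF deriv E_nonneg g h le, of s "E s"] s s_max Es
      by (auto simp: K_def H_def)
    then have "sqrt (E s) \<le> H + sqrt K"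
      using K H Es by (intro le_add_sqrt_if_square_le) auto
    then have "(sqrt (E s))\<^sup>2 \<le> (H + sqrt K)\<^sup>2"
      using Es by (intro power_mono) auto
    then show ?thesis using s_max[of t] t Es by auto
  qed
  then show ?thesis by blast
qed

lemma linear_majorant_if_sqrt_differential_inequality:
  fixes E E' P g h :: "real \<Rightarrow> real"
  assumes deriv: "\<And>t. t \<ge> T \<Longrightarrow> (E has_vector_derivative E' t) (at t within {T..})"
    and E_nonneg: "\<And>t. t \<ge> T \<Longrightarrow> 0 \<le> E t" and P_nonneg: "\<And>t. t \<ge> T \<Longrightarrow> 0 \<le> P t"
    and g: "continuous_on {T..} g" "\<And>t. t \<ge> T \<Longrightarrow> 0 \<le> g t" "g integrable_on {T..}"
    and h: "continuous_on {T..} h" "\<And>t. t \<ge> T \<Longrightarrow> 0 \<le> h t" "h integrable_on {T..}"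
    and le: "\<And>t. t \<ge> T \<Longrightarrow> E' t + P t \<le> g t + h t * sqrt (E t)"
  obtains k where "continuous_on {T..} k" "\<And>t. t \<ge> T \<Longrightarrow> 0 \<le> k t" "k integrable_on {T..}"
    and "\<And>t. t \<ge> T \<Longrightarrow> E' t + P t \<le> k t"
proof -
  have "E' t \<le> g t + h t * sqrt (E t)" if "T \<le> t" for t
    using le[OF that] P_nonneg[OF that] by linarith
  then obtain M where M: "\<And>t. T \<le> t \<Longrightarrow> E t \<le> M"
    using bounded_if_sqrt_differential_inequality[OF deriv E_nonneg g h] by blast
  have M_nonneg: "0 \<le> M" using M[of T] E_nonneg[of T] by simp
  show thesis
  proof (rule that[of "\<lambda>t. g t + h t * sqrt M"])
    show "continuous_on {T..} (\<lambda>t. g t + h t * sqrt M)" by (intro continuous_intros g(1) h(1))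
    show "0 \<le> g t + h t * sqrt M" if "T \<le> t" for t using g(2)[OF that] h(2)[OF that] M_nonneg by simp
    show "(\<lambda>t. g t + h t * sqrt M) integrable_on {T..}"
      using integrable_add[OF g(3) integrable_cmul[OF h(3), of "sqrt M"]] by (simp add: mult.commute)
    show "E' t + P t \<le> g t + h t * sqrt M" if "T \<le> t" for t
      using le[OF that] mult_left_mono[OF real_sqrt_le_mono[OF M[OF that]] h(2)[OF that]] by linarith
  qed
qed

lemma integrable_if_dissipation_inequality:
  fixes E E' P k :: "real \<Rightarrow> real"
  assumes deriv: "\<And>t. t \<ge> T \<Longrightarrow> (E has_vector_derivative E' t) (at t within {T..})"
    and E_nonneg: "\<And>t. t \<ge> T \<Longrightarrow> 0 \<le> E t"
    and P: "continuous_on {T..} P" "\<And>t. t \<ge> T \<Longrightarrow> 0 \<le> P t"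
    and k: "continuous_on {T..} k" "\<And>t. t \<ge> T \<Longrightarrow> 0 \<le> k t" "k integrable_on {T..}"
    and le: "\<And>t. t \<ge> T \<Longrightarrow> E' t + P t \<le> k t"
  shows "P integrable_on {T..}"
proof (rule nonneg_integrable_on_atLeast[OF P])
  fix t assume t: "T \<le> t"
  have subint: "f integrable_on {T..t}" if "continuous_on {T..} f" for f :: "real \<Rightarrow> real"
    by (intro integrable_continuous_real continuous_on_subset[OF that]) auto
  have "continuous_on {T..} (\<lambda>s. k s - P s)" by (intro continuous_on_diff k(1) P(1))
  moreover have "E' s \<le> k s - P s" if "T \<le> s" for s using le[OF that] by simp
  ultimately have "E t \<le> E T + integral {T..t} (\<lambda>s. k s - P s)"
    by (intro le_add_integral_of_derivative_le[OF deriv _ _ order_refl t])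
  also have "\<dots> = E T + integral {T..t} k - integral {T..t} P"
    by (simp add: integral_diff subint k P)
  also have "integral {T..t} k \<le> integral {T..} k"
    by (intro integral_subset_le subint k) (auto intro: k(2))
  finally show "integral {T..t} P \<le> E T + integral {T..} k"
    using E_nonneg[OF t] by simp
qed

lemma nonneg_integrable_tail_less:
  fixes k :: "real \<Rightarrow> real"
  assumes k: "k integrable_on {T..}" "\<And>t. t \<ge> T \<Longrightarrow> 0 \<le> k t" and "0 < \<epsilon>"
  obtains S where "T \<le> S" "\<And>s t. S \<le> s \<Longrightarrow> integral {s..t} k < \<epsilon>"
proof -
  define I where "I t = integral {T..t} k" for t
  have subint: "k integrable_on {a..b}" if "T \<le> a" for a b
    using that by (intro integrable_on_subinterval[OF k(1)]) auto
  have split: "I t = I s + integral {s..t} k" if "T \<le> s" "s \<le> t" for s t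
    unfolding I_def using that
    by (intro Henstock_Kurzweil_Integration.integral_combine[symmetric] subint) auto
  have bdd: "bdd_above (I ` {T..})"
  proof (rule bdd_aboveI2)
    show "I t \<le> integral {T..} k" if "t \<in> {T..}" for t
      unfolding I_def using that by (intro integral_subset_le subint k) (auto intro: k(2))
  qed
  obtain S where S: "T \<le> S" "(SUP t\<in>{T..}. I t) - \<epsilon> < I S"
    using less_cSUP_iff[OF _ bdd, of "(SUP t\<in>{T..}. I t) - \<epsilon>"] \<open>0 < \<epsilon>\<close> by auto
  have "integral {s..t} k < \<epsilon>" if s: "S \<le> s" for s t
  proof (cases "s \<le> t")
    case True
    have "I t \<le> (SUP t\<in>{T..}. I t)" using s S True by (intro cSUP_upper bdd) auto
    moreover have "0 \<le> integral {S..s} k" using s S by (intro integral_nonneg subint k) auto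
    ultimately show ?thesis using split[of S s] split[of s t] S s True by linarith
  qed (use \<open>0 < \<epsilon>\<close> in simp)
  with S show thesis by (intro that) auto
qed

lemma tendsto_zero_if_increment_le_integral:
  fixes W k :: "real \<Rightarrow> real"
  assumes T: "0 < T"
    and incr: "\<And>s t. T \<le> s \<Longrightarrow> s \<le> t \<Longrightarrow> W t \<le> W s + integral {s..t} k"
    and k: "k integrable_on {T..}" "\<And>t. t \<ge> T \<Longrightarrow> 0 \<le> k t"
    and W: "\<And>t. t \<ge> T \<Longrightarrow> 0 \<le> W t" "(\<lambda>s. W s / s) integrable_on {T..}"
  shows "(W \<longlongrightarrow> 0) at_top"
proof (rule tendstoI)
  fix \<epsilon> :: real assume \<epsilon>: "0 < \<epsilon>"
  obtain S\<^sub>1 where S\<^sub>1: "T \<le> S\<^sub>1" "\<And>s t. S\<^sub>1 \<le> s \<Longrightarrow> integral {s..t} k < \<epsilon> / 2"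
    by (rule nonneg_integrable_tail_less[OF k, where \<epsilon> = "\<epsilon> / 2"]) (use \<epsilon> in auto)
  obtain S\<^sub>2 where S\<^sub>2: "T \<le> S\<^sub>2" "\<And>s t. S\<^sub>2 \<le> s \<Longrightarrow> integral {s..t} (\<lambda>s. W s / s) < \<epsilon> / 4"
  proof (rule nonneg_integrable_tail_less[OF W(2), where \<epsilon> = "\<epsilon> / 4"])
    show "0 \<le> W t / t" if "T \<le> t" for t using W(1)[OF that] that T by simp
  qed (use \<epsilon> in auto)
  have "W t < \<epsilon>" if t: "2 * max S\<^sub>1 S\<^sub>2 \<le> t" for t
  proof (rule ccontr)
    assume "\<not> W t < \<epsilon>"
    have t_pos: "0 < t" using t T S\<^sub>1 by linarith
    \<comment> \<open>W stays above \<epsilon>/2 on [t/2, t], so W s / s has integral at least \<epsilon>/4 there\<close>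
    have "integral {t/2..t} (\<lambda>_. \<epsilon> / (2 * t)) \<le> integral {t/2..t} (\<lambda>s. W s / s)"
    proof (rule integral_le)
      show "(\<lambda>s. W s / s) integrable_on {t/2..t}"
        using t S\<^sub>1 by (intro integrable_on_subinterval[OF W(2)]) auto
      fix s assume s: "s \<in> {t/2..t}"
      then have "W t \<le> W s + integral {s..t} k" using t S\<^sub>1 by (intro incr) auto
      moreover have "integral {s..t} k < \<epsilon> / 2" using s t by (intro S\<^sub>1(2)) auto
      ultimately have "\<epsilon> / 2 \<le> W s" using \<open>\<not> W t < \<epsilon>\<close> by linarith
      moreover have "0 < s" "s \<le> t" using s t_pos by auto
      ultimately have "(\<epsilon> / 2) / t \<le> W s / s"
        using \<epsilon> by (intro frac_le) auto
      then show "\<epsilon> / (2 * t) \<le> W s / s" by simp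
    qed (rule integrable_const_ivl)
    moreover have "integral {t/2..t} (\<lambda>_. \<epsilon> / (2 * t)) = \<epsilon> / 4"
      using t_pos by simp
    ultimately show False using S\<^sub>2(2)[of "t/2" t] t by linarith
  qed
  moreover have "0 \<le> W t" if "2 * max S\<^sub>1 S\<^sub>2 \<le> t" for t
    using that S\<^sub>1 T by (intro W(1)) linarith
  ultimately show "\<forall>\<^sub>F t in at_top. dist (W t) 0 < \<epsilon>"
    unfolding eventually_at_top_linorder by (intro exI[of _ "2 * max S\<^sub>1 S\<^sub>2"]) auto
qed

lemma at_within_atLeast_neq_bot:
  fixes t T :: real
  assumes "T \<le> t"
  shows "at t within {T..} \<noteq> bot"
proof -
  have "{t<..} \<subseteq> {T..} - {t}" using assms by auto
  then have "closure {t<..} \<subseteq> closure ({T..} - {t})" by (rule closure_mono)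
  moreover have "t \<in> closure {t<..}" by simp
  ultimately show ?thesis by (auto simp: at_within_eq_bot_iff)
qed

section \<open>Convex functions with a gradient\<close>

lemma convex_on_gradient_inequality:
  fixes f :: "'a::real_inner \<Rightarrow> real"
  assumes grad: "\<And>y. (f has_derivative (\<lambda>h. gf y \<bullet> h)) (at y)"
    and convex: "convex_on UNIV f"
  shows "f z + gf z \<bullet> (y - z) \<le> f y"
proof -
  define \<phi> where "\<phi> \<tau> = f (z + \<tau> *\<^sub>R (y - z))" for \<tau> :: real
  have "convex_on UNIV \<phi>"
  proof (rule convex_onI)
    fix t a b :: real assume t: "0 < t" "t < 1"
    have "z + ((1 - t) *\<^sub>R a + t *\<^sub>R b) *\<^sub>R (y - z)
        = (1 - t) *\<^sub>R (z + a *\<^sub>R (y - z)) + t *\<^sub>R (z + b *\<^sub>R (y - z))"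
      by (simp add: algebra_simps)
    then show "\<phi> ((1 - t) *\<^sub>R a + t *\<^sub>R b) \<le> (1 - t) * \<phi> a + t * \<phi> b"
      unfolding \<phi>_def using convex_onD[OF convex, of t] t by auto
  qed simp
  moreover have "(\<phi> has_real_derivative gf z \<bullet> (y - z)) (at 0)"
  proof -
    have "((\<lambda>\<tau>. z + \<tau> *\<^sub>R (y - z)) has_derivative (\<lambda>h. h *\<^sub>R (y - z))) (at 0)"
      by (auto intro!: derivative_eq_intros)
    moreover have "(f has_derivative (\<lambda>h. gf z \<bullet> h)) (at ((\<lambda>\<tau>. z + \<tau> *\<^sub>R (y - z)) 0))"
      using grad[of z] by simp
    ultimately have chain: "(f \<circ> (\<lambda>\<tau>. z + \<tau> *\<^sub>R (y - z)) has_derivative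
        (\<lambda>h. gf z \<bullet> h) \<circ> (\<lambda>h. h *\<^sub>R (y - z))) (at 0)"
      by (rule diff_chain_at)
    have "\<phi> = f \<circ> (\<lambda>\<tau>. z + \<tau> *\<^sub>R (y - z))" by (auto simp: \<phi>_def)
    then show ?thesis
      unfolding has_field_derivative_def
      by (simp only:) (rule has_derivative_eq_rhs[OF chain], auto simp: fun_eq_iff)
  qed
  ultimately have "gf z \<bullet> (y - z) * (1 - 0) \<le> \<phi> 1 - \<phi> 0"
    by (intro convex_on_imp_above_tangent) auto
  then show ?thesis by (simp add: \<phi>_def)
qed

lemma convex_on_gradient_monotone:
  fixes f :: "'a::real_inner \<Rightarrow> real"
  assumes "\<And>y. (f has_derivative (\<lambda>h. gf y \<bullet> h)) (at y)" and "convex_on UNIV f"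
  shows "0 \<le> (gf y - gf z) \<bullet> (y - z)"
  using convex_on_gradient_inequality[OF assms, of y z] convex_on_gradient_inequality[OF assms, of z y]
  by (simp add: inner_diff_left inner_diff_right inner_commute)

lemma has_vector_derivative_difference_quotient:
  fixes f :: "real \<Rightarrow> 'a::real_normed_vector"
  assumes "(f has_vector_derivative D) (at x within S)"
  shows "((\<lambda>y. (1 / (y - x)) *\<^sub>R (f y - f x)) \<longlongrightarrow> D) (at x within S)"
proof -
  have "((\<lambda>y. norm (f y - f x - (y - x) *\<^sub>R D) / norm (y - x)) \<longlongrightarrow> 0) (at x within S)"
    using assms unfolding has_vector_derivative_def has_derivative_iff_norm by simp
  moreover have "norm (f y - f x - (y - x) *\<^sub>R D) / norm (y - x)
      = norm ((1 / (y - x)) *\<^sub>R (f y - f x) - D)" if "y \<noteq> x" for y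
  proof -
    have "(1 / (y - x)) *\<^sub>R (f y - f x) - D = (1 / (y - x)) *\<^sub>R (f y - f x - (y - x) *\<^sub>R D)"
      using that by (simp add: scaleR_right_diff_distrib)
    then show ?thesis by (simp add: divide_inverse mult.commute)
  qed
  then have "\<forall>\<^sub>F y in at x within S. norm (f y - f x - (y - x) *\<^sub>R D) / norm (y - x)
      = norm ((1 / (y - x)) *\<^sub>R (f y - f x) - D)"
    by (auto simp: eventually_at_filter)
  ultimately have "((\<lambda>y. norm ((1 / (y - x)) *\<^sub>R (f y - f x) - D)) \<longlongrightarrow> 0) (at x within S)"
    by (rule Lim_transform_eventually)
  then show ?thesis
    using tendsto_norm_zero_iff LIM_zero_iff by blast
qed

lemma monotone_along_curve_inner_derivative_nonneg:
  fixes x :: "real \<Rightarrow> 'a::real_inner" and G :: "'a \<Rightarrow> 'a"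
  assumes x: "(x has_vector_derivative x') (at t within S)"
    and Gx: "((\<lambda>s. G (x s)) has_vector_derivative d) (at t within S)"
    and nontrivial: "at t within S \<noteq> bot"
    and monotone: "\<And>y z. 0 \<le> (G y - G z) \<bullet> (y - z)"
  shows "0 \<le> x' \<bullet> d"
proof (rule tendsto_lowerbound)
  show "((\<lambda>s. ((1 / (s - t)) *\<^sub>R (x s - x t)) \<bullet> ((1 / (s - t)) *\<^sub>R (G (x s) - G (x t))))
      \<longlongrightarrow> x' \<bullet> d) (at t within S)"
    by (intro tendsto_inner has_vector_derivative_difference_quotient x Gx)
  have "0 \<le> ((1 / (s - t)) *\<^sub>R (x s - x t)) \<bullet> ((1 / (s - t)) *\<^sub>R (G (x s) - G (x t)))" for s
    using mult_nonneg_nonneg[OF zero_le_power2[of "1 / (s - t)"] monotone[of "x s" "x t"]]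
    by (simp add: power2_eq_square inner_commute)
  then show "\<forall>\<^sub>F s in at t within S.
      0 \<le> ((1 / (s - t)) *\<^sub>R (x s - x t)) \<bullet> ((1 / (s - t)) *\<^sub>R (G (x s) - G (x t)))"
    by simp
qed (rule nontrivial)

lemma norm_add3_square_le:
  fixes a b c :: "'a::real_normed_vector"
  shows "(norm (a + b + c))\<^sup>2 \<le> 3 * ((norm a)\<^sup>2 + (norm b)\<^sup>2 + (norm c)\<^sup>2)"
proof -
  have "norm (a + b + c) \<le> norm a + norm b + norm c"
    by (meson norm_triangle_le order_refl add_mono)
  then have "(norm (a + b + c))\<^sup>2 \<le> (norm a + norm b + norm c)\<^sup>2" by (simp add: power_mono)
  also have "\<dots> \<le> 3 * ((norm a)\<^sup>2 + (norm b)\<^sup>2 + (norm c)\<^sup>2)"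
    using sum_squares_ge_zero[of "norm a - norm b" "norm b - norm c"]
      zero_le_power2[of "norm a - norm c"]
    by (simp add: power2_eq_square algebra_simps)
  finally show ?thesis .
qed

text \<open>x' and v' are the velocities of x and of v along the dynamics.\<close>

lemma lyapunov_derivative_identity:
  fixes p v g ee :: "'a::real_inner" and t lam \<alpha> \<beta> F :: real
  assumes "t \<noteq> 0"
  defines "\<gamma> \<equiv> \<beta> * (\<alpha> - lam)" and "\<xi> \<equiv> lam * (\<alpha> - 1 - lam)"
  defines "x' \<equiv> v - \<beta> *\<^sub>R (g + ee)"
  defines "v' \<equiv> - (\<alpha> / t) *\<^sub>R x' - (g + ee)"
  shows "(2 * t - \<gamma>) * F + t * (t - \<gamma>) * (g \<bullet> x')
         + (lam *\<^sub>R p + t *\<^sub>R v) \<bullet> (lam *\<^sub>R x' + (t *\<^sub>R v' + v)) + \<xi> * (p \<bullet> x')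
       = (2 * t - \<gamma>) * F - lam * (t - \<beta>) * (p \<bullet> g) - lam * (t - \<beta>) * (p \<bullet> ee)
         + t * (lam + 1 - \<alpha>) * (v \<bullet> v) - t * (t - \<gamma>) * \<beta> * (g \<bullet> g)
         - t * (t - \<gamma>) * (v \<bullet> ee) - t * (t - \<gamma>) * \<beta> * (g \<bullet> ee)"
proof -
  have tv': "t *\<^sub>R v' = - \<alpha> *\<^sub>R x' - t *\<^sub>R (g + ee)"
    unfolding v'_def using assms(1) by (simp add: algebra_simps)
  show ?thesis
    unfolding tv' unfolding x'_def \<gamma>_def \<xi>_def
    by (simp add: inner_add_left inner_add_right inner_diff_left inner_diff_right
        inner_commute[of v p] inner_commute[of g p] inner_commute[of ee p] inner_commute[of g v]
        inner_commute[of ee v] inner_commute[of ee g] algebra_simps)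
qed

lemma gradient_error_terms_le:
  fixes g ee :: "'a::real_inner"
  assumes "t\<^sup>2 / 2 \<le> a" "0 \<le> \<beta>"
  shows "\<beta> / 4 * (t\<^sup>2 * (g \<bullet> g)) - a * \<beta> * (g \<bullet> g) - a * \<beta> * (g \<bullet> ee)
    \<le> a * \<beta> / 2 * (ee \<bullet> ee)"
proof -
  have "0 \<le> a" using assms(1) zero_le_power2[of t] by linarith
  then have a\<beta>: "0 \<le> a * \<beta>" using assms(2) by simp
  have "- (g \<bullet> ee) \<le> (g \<bullet> g + ee \<bullet> ee) / 2"
    using inner_ge_zero[of "g + ee"] by (simp add: inner_add_left inner_add_right inner_commute)
  from mult_left_mono[OF this a\<beta>]
  have "- a * \<beta> * (g \<bullet> ee) \<le> a * \<beta> / 2 * (g \<bullet> g) + a * \<beta> / 2 * (ee \<bullet> ee)"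
    by (simp add: algebra_simps)
  moreover have "\<beta> / 4 * (t\<^sup>2 * (g \<bullet> g)) \<le> \<beta> / 4 * ((2 * a) * (g \<bullet> g))"
    using assms by (intro mult_left_mono mult_right_mono) auto
  ultimately show ?thesis by (simp add: algebra_simps)
qed

lemma perturbation_cross_terms_le:
  fixes p v ee :: "'a::real_inner"
  assumes "0 \<le> lam" "0 \<le> s" "s \<le> t" "\<bar>a\<bar> \<le> t\<^sup>2"
  shows "- lam * s * (p \<bullet> ee) - a * (v \<bullet> ee) \<le> t * norm ee * (lam * norm p + t * norm v)"
proof -
  have "\<bar>lam * s * (p \<bullet> ee)\<bar> \<le> lam * t * (norm p * norm ee)"
    using assms Cauchy_Schwarz_ineq2[of p ee] by (simp add: abs_mult mult_mono)
  moreover have "\<bar>a * (v \<bullet> ee)\<bar> \<le> t\<^sup>2 * (norm v * norm ee)"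
    using assms Cauchy_Schwarz_ineq2[of v ee] by (simp add: abs_mult mult_mono)
  ultimately show ?thesis by (simp add: power2_eq_square algebra_simps)
qed

lemma le_sqrt_mult_sqrt_if_squares_le:
  fixes X Q R E lam \<xi> :: real
  assumes "0 \<le> Q" "0 \<le> R" "0 < \<xi>"
    and "X \<le> Q + 2 * lam * R" and "Q\<^sup>2 / 2 \<le> E" "\<xi> / 2 * R\<^sup>2 \<le> E"
  shows "X \<le> sqrt (4 + 16 * lam\<^sup>2 / \<xi>) * sqrt E"
proof -
  have "(Q + 2 * lam * R)\<^sup>2 \<le> 2 * Q\<^sup>2 + 8 * lam\<^sup>2 * R\<^sup>2"
    using zero_le_power2[of "Q - 2 * lam * R"] by (simp add: power2_eq_square algebra_simps)
  also have "2 * Q\<^sup>2 \<le> 4 * E" using assms(5) by simp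
  also have "8 * lam\<^sup>2 * R\<^sup>2 = (16 * lam\<^sup>2 / \<xi>) * (\<xi> / 2 * R\<^sup>2)"
    using assms(3) by (simp add: field_simps)
  also have "\<dots> \<le> (16 * lam\<^sup>2 / \<xi>) * E"
    using assms(3,6) by (intro mult_left_mono) auto
  finally have "Q + 2 * lam * R \<le> sqrt ((4 + 16 * lam\<^sup>2 / \<xi>) * E)"
    by (intro real_le_rsqrt) (simp add: algebra_simps)
  then show ?thesis using assms(4) by (simp add: real_sqrt_mult)
qed

section \<open>The dynamics\<close>

locale hessian_driven_damping =
  fixes f :: "'a::{real_inner, complete_space} \<Rightarrow> real"
    and gf :: "'a \<Rightarrow> 'a"
    and e e' :: "real \<Rightarrow> 'a"
    and x x' x'' w :: "real \<Rightarrow> 'a"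
    and t0 \<alpha> \<beta> :: real
  assumes t0_pos: "t0 > 0"
    and f_grad: "\<And>y. (f has_derivative (\<lambda>h. gf y \<bullet> h)) (at y)"
    and f_convex: "convex_on UNIV f"
    and e_deriv: "\<And>t. t \<ge> t0 \<Longrightarrow> (e has_vector_derivative e' t) (at t within {t0..})"
    and e'_cont: "continuous_on {t0..} e'"
    and e_int: "(\<lambda>t. t * norm (e t)) integrable_on {t0..}"
    and e'_int: "(\<lambda>t. t * norm (e' t)) integrable_on {t0..}"
    and alpha: "\<alpha> > 3"
    and beta: "\<beta> > 0"
    and x_deriv: "\<And>t. t \<ge> t0 \<Longrightarrow> (x has_vector_derivative x' t) (at t within {t0..})"
    and x'_deriv: "\<And>t. t \<ge> t0 \<Longrightarrow> (x' has_vector_derivative x'' t) (at t within {t0..})"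
    and w_deriv: "\<And>t. t \<ge> t0 \<Longrightarrow>
        ((\<lambda>s. gf (x s) + e s) has_vector_derivative w t) (at t within {t0..})"
    and ode: "\<And>t. t \<ge> t0 \<Longrightarrow>
        x'' t + (\<alpha> / t) *\<^sub>R x' t + \<beta> *\<^sub>R w t + gf (x t) + e t = 0"
begin

lemma continuous_on_x: "continuous_on {t0..} x"
  by (rule continuous_on_vector_derivative) (auto intro: x_deriv)

lemma continuous_on_x': "continuous_on {t0..} x'"
  by (rule continuous_on_vector_derivative) (auto intro: x'_deriv)

lemma continuous_on_e: "continuous_on {t0..} e"
  by (rule continuous_on_vector_derivative) (auto intro: e_deriv)

lemma continuous_on_gf_x: "continuous_on {t0..} (\<lambda>s. gf (x s))"
proof -
  have "continuous_on {t0..} (\<lambda>s. (gf (x s) + e s) - e s)"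
    by (intro continuous_on_diff continuous_on_e continuous_on_vector_derivative) (auto intro: w_deriv)
  then show ?thesis by simp
qed

lemma continuous_on_f_x: "continuous_on {t0..} (\<lambda>s. f (x s))"
proof -
  have "continuous_on UNIV f"
    by (rule continuous_at_imp_continuous_on) (auto intro: has_derivative_continuous f_grad)
  then show ?thesis by (rule continuous_on_compose2[OF _ continuous_on_x]) auto
qed

lemma has_vector_derivative_f_x:
  assumes "t \<ge> t0"
  shows "((\<lambda>s. f (x s)) has_vector_derivative (gf (x t) \<bullet> x' t)) (at t within {t0..})"
  using vector_derivative_diff_chain_within[OF x_deriv[OF assms] has_derivative_at_withinI[OF f_grad]]
  by (simp add: o_def)

lemma x''_eq:
  assumes "t \<ge> t0"
  shows "x'' t = - (\<alpha> / t) *\<^sub>R x' t - \<beta> *\<^sub>R w t - (gf (x t) + e t)"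
  using ode[OF assms] by (simp add: algebra_simps eq_neg_iff_add_eq_0)

lemma weighted_e_bounded: "\<exists>C. \<forall>t\<ge>t0. t * norm (e t) \<le> C"
proof -
  define g where "g s = norm (e s) * s / t0 + s * norm (e' s)" for s
  have g_int: "g integrable_on {t0..}"
    unfolding g_def using e_int e'_int
    by (intro integrable_add integrable_on_divide) (auto simp: mult.commute)
  have g_nonneg: "0 \<le> g s" if "t0 \<le> s" for s
    using that t0_pos by (auto simp: g_def)
  have "t * norm (e t) \<le> t0 * norm (e t0) + integral {t0..} g" if t: "t0 \<le> t" for t
  proof -
    have "norm (t *\<^sub>R e t - t0 *\<^sub>R e t0) \<le> integral {t0..t} g"
    proof (rule norm_diff_le_integral_of_norm_derivative_le[OF t])
      fix s assume s: "s \<in> {t0..t}"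
      show "((\<lambda>s. s *\<^sub>R e s) has_vector_derivative s *\<^sub>R e' s + 1 *\<^sub>R e s) (at s within {t0..t})"
        using s by (intro has_vector_derivative_scaleR has_vector_derivative_within_subset[OF e_deriv])
          (auto intro: has_vector_derivative_id)
      have "t0 * norm (e s) \<le> s * norm (e s)" using s by (intro mult_right_mono) auto
      then have "norm (e s) \<le> norm (e s) * s / t0" using t0_pos by (simp add: field_simps)
      moreover have "norm (s *\<^sub>R e' s + 1 *\<^sub>R e s) \<le> s * norm (e' s) + norm (e s)"
        using s t0_pos norm_triangle_ineq[of "s *\<^sub>R e' s" "e s"] by simp
      ultimately show "norm (s *\<^sub>R e' s + 1 *\<^sub>R e s) \<le> g s" by (simp add: g_def)
    next
      show "g integrable_on {t0..t}" by (rule integrable_on_subinterval[OF g_int]) auto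
    qed
    also have "\<dots> \<le> integral {t0..} g"
      using g_nonneg by (intro integral_subset_le integrable_on_subinterval[OF g_int] g_int) auto
    finally show ?thesis
      using t t0_pos norm_triangle_ineq2[of "t *\<^sub>R e t" "t0 *\<^sub>R e t0"] by simp
  qed
  then show ?thesis by blast
qed

end

section \<open>Energy estimates around a minimizer\<close>

locale hessian_driven_damping_minimizer = hessian_driven_damping +
  fixes xs :: "'a::{real_inner, complete_space}"
  assumes xs_min: "\<forall>y. f xs \<le> f y"
begin

definition lam :: real where "lam = (\<alpha> + 1) / 2"
definition \<gamma> :: real where "\<gamma> = \<beta> * (\<alpha> - lam)"
definition \<xi> :: real where "\<xi> = lam * (\<alpha> - 1 - lam)"
definition v :: "real \<Rightarrow> 'a" where "v s = x' s + \<beta> *\<^sub>R (gf (x s) + e s)"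
definition F :: "real \<Rightarrow> real" where "F s = f (x s) - f xs"

definition E :: "real \<Rightarrow> real" where
  "E s = s * (s - \<gamma>) * F s + (norm (lam *\<^sub>R (x s - xs) + s *\<^sub>R v s))\<^sup>2 / 2
    + \<xi> / 2 * (norm (x s - xs))\<^sup>2"

definition E' :: "real \<Rightarrow> real" where
  "E' t = (2 * t - \<gamma>) * F t - lam * (t - \<beta>) * (gf (x t) \<bullet> (x t - xs))
    - lam * (t - \<beta>) * ((x t - xs) \<bullet> e t) + t * (lam + 1 - \<alpha>) * (v t \<bullet> v t)
    - t * (t - \<gamma>) * \<beta> * (gf (x t) \<bullet> gf (x t)) - t * (t - \<gamma>) * (v t \<bullet> e t)
    - t * (t - \<gamma>) * \<beta> * (gf (x t) \<bullet> e t)"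

definition P :: "real \<Rightarrow> real" where
  "P t = (lam - 2) / 2 * (t * (gf (x t) \<bullet> (x t - xs))) + (\<alpha> - 1 - lam) * (t * (norm (v t))\<^sup>2)
    + \<beta> / 4 * (t\<^sup>2 * (norm (gf (x t)))\<^sup>2)"

definition t\<^sub>1 :: real where "t\<^sub>1 = max t0 (max (2 * \<gamma>) (2 * lam * \<beta> / (lam - 2)))"

lemma lam_gt_2: "2 < lam"
  using alpha by (simp add: lam_def)

lemma lam_lt_alpha_minus_1: "0 < \<alpha> - 1 - lam"
  using alpha by (simp add: lam_def)

lemma \<xi>_pos: "0 < \<xi>"
  using lam_gt_2 lam_lt_alpha_minus_1 by (simp add: \<xi>_def)

lemma \<gamma>_pos: "0 < \<gamma>"
  using beta lam_lt_alpha_minus_1 by (simp add: \<gamma>_def)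

lemma F_nonneg: "0 \<le> F s"
  using xs_min by (simp add: F_def)

lemma F_le_inner_gf: "F s \<le> gf (x s) \<bullet> (x s - xs)"
  using convex_on_gradient_inequality[OF f_grad f_convex, of "x s" xs]
  by (simp add: F_def inner_diff_right)

lemma inner_gf_nonneg: "0 \<le> gf (x s) \<bullet> (x s - xs)"
  using F_nonneg F_le_inner_gf order_trans by blast

lemma has_vector_derivative_E:
  assumes t: "t \<ge> t0"
  shows "(E has_vector_derivative E' t) (at t within {t0..})"
proof -
  define p where "p s = x s - xs" for s
  define q where "q s = lam *\<^sub>R p s + s *\<^sub>R v s" for s
  define v' where "v' = x'' t + \<beta> *\<^sub>R w t"
  have v: "(v has_vector_derivative v') (at t within {t0..})"
    unfolding v_def[abs_def] v'_def
    using has_vector_derivative_add[OF x'_deriv[OF t]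
        has_vector_derivative_scaleR[OF DERIV_const w_deriv[OF t]]] by simp
  have p: "(p has_vector_derivative x' t) (at t within {t0..})"
    unfolding p_def[abs_def]
    using has_vector_derivative_diff[OF x_deriv[OF t] has_vector_derivative_const] by simp
  have q: "(q has_vector_derivative (lam *\<^sub>R x' t + (t *\<^sub>R v' + 1 *\<^sub>R v t))) (at t within {t0..})"
    unfolding q_def[abs_def]
    using has_vector_derivative_add[OF has_vector_derivative_scaleR[OF DERIV_const p]
        has_vector_derivative_scaleR[OF DERIV_ident v]] by simp
  have F: "(F has_vector_derivative (gf (x t) \<bullet> x' t)) (at t within {t0..})"
    unfolding F_def[abs_def]
    using has_vector_derivative_diff[OF has_vector_derivative_f_x[OF t] has_vector_derivative_const] by simp
  have "(E has_vector_derivative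
      (t * (t - \<gamma>) * (gf (x t) \<bullet> x' t) + (t * (1 - 0) + 1 * (t - \<gamma>)) * F t
       + (q t \<bullet> (lam *\<^sub>R x' t + (t *\<^sub>R v' + 1 *\<^sub>R v t)) + (lam *\<^sub>R x' t + (t *\<^sub>R v' + 1 *\<^sub>R v t)) \<bullet> q t) / 2
       + \<xi> / 2 * (p t \<bullet> x' t + x' t \<bullet> p t))) (at t within {t0..})"
  proof -
    have "E = (\<lambda>s. s * (s - \<gamma>) * F s + (q s \<bullet> q s) / 2 + \<xi> / 2 * (p s \<bullet> p s))"
      by (simp add: E_def p_def q_def power2_norm_eq_inner fun_eq_iff)
    moreover have "((\<lambda>s. s * (s - \<gamma>)) has_vector_derivative (t * (1 - 0) + 1 * (t - \<gamma>))) (at t within {t0..})"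
      by (intro has_vector_derivative_mult has_vector_derivative_diff has_vector_derivative_id
          has_vector_derivative_const)
    ultimately show ?thesis
      by (simp only:) (intro has_vector_derivative_add has_vector_derivative_mult[OF _ F]
          has_vector_derivative_mult_right has_vector_derivative_divide
          bounded_bilinear.has_vector_derivative[OF bounded_bilinear_inner] q p)
  qed
  moreover have "v' = - (\<alpha> / t) *\<^sub>R x' t - (gf (x t) + e t)"
    unfolding v'_def x''_eq[OF t] by simp
  moreover have "x' t = v t - \<beta> *\<^sub>R (gf (x t) + e t)"
    by (simp add: v_def)
  ultimately show ?thesis
    using lyapunov_derivative_identity[where t = t and v = "v t" and g = "gf (x t)" and ee = "e t"
        and \<alpha> = \<alpha> and \<beta> = \<beta> and lam = lam and F = "F t" and p = "p t"] t t0_pos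
    by (elim has_vector_derivative_eq_rhs)
      (simp add: q_def E'_def \<gamma>_def \<xi>_def p_def inner_commute)
qed

lemma t\<^sub>1_ge: "t0 \<le> t\<^sub>1" "2 * \<gamma> \<le> t\<^sub>1" "2 * lam * \<beta> / (lam - 2) \<le> t\<^sub>1" "\<beta> \<le> t\<^sub>1"
proof -
  show "t0 \<le> t\<^sub>1" "2 * \<gamma> \<le> t\<^sub>1" "2 * lam * \<beta> / (lam - 2) \<le> t\<^sub>1" by (auto simp: t\<^sub>1_def)
  have "2 * \<gamma> = \<beta> * (\<alpha> - 1)" by (simp add: \<gamma>_def lam_def field_simps)
  moreover have "\<beta> * 1 \<le> \<beta> * (\<alpha> - 1)" using alpha beta by (intro mult_left_mono) auto
  ultimately have "\<beta> \<le> 2 * \<gamma>" by simp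
  with \<open>2 * \<gamma> \<le> t\<^sub>1\<close> show "\<beta> \<le> t\<^sub>1" by linarith
qed

lemma beyond_t\<^sub>1:
  assumes "t\<^sub>1 \<le> t"
  shows "0 < t" "t\<^sup>2 / 2 \<le> t * (t - \<gamma>)" "t * (t - \<gamma>) \<le> t\<^sup>2" "0 \<le> t - \<beta>"
proof -
  show t_pos: "0 < t" using assms t\<^sub>1_ge t0_pos by linarith
  have "2 * \<gamma> * t \<le> t * t"
    using assms t\<^sub>1_ge(2) t_pos by (intro mult_right_mono) auto
  moreover have "0 \<le> \<gamma> * t" using t_pos \<gamma>_pos by simp
  ultimately show "t\<^sup>2 / 2 \<le> t * (t - \<gamma>)" "t * (t - \<gamma>) \<le> t\<^sup>2"
    by (simp_all add: power2_eq_square algebra_simps)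
  show "0 \<le> t - \<beta>" using assms t\<^sub>1_ge(4) by linarith
qed

lemma E_lower_bounds:
  assumes "t\<^sub>1 \<le> t"
  shows "(norm (lam *\<^sub>R (x t - xs) + t *\<^sub>R v t))\<^sup>2 / 2 \<le> E t"
    and "\<xi> / 2 * (norm (x t - xs))\<^sup>2 \<le> E t"
proof -
  have "0 \<le> t * (t - \<gamma>)" using assms t\<^sub>1_ge \<gamma>_pos by simp
  then have "0 \<le> t * (t - \<gamma>) * F t" using F_nonneg by simp
  then show "(norm (lam *\<^sub>R (x t - xs) + t *\<^sub>R v t))\<^sup>2 / 2 \<le> E t"
    and "\<xi> / 2 * (norm (x t - xs))\<^sup>2 \<le> E t"
    using \<xi>_pos by (auto simp: E_def)
qed

lemma E_nonneg: "t\<^sub>1 \<le> t \<Longrightarrow> 0 \<le> E t"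
  using E_lower_bounds(1) zero_le_power2 by (smt (verit) divide_nonneg_pos)

lemma P_nonneg: "0 \<le> t \<Longrightarrow> 0 \<le> P t"
  unfolding P_def using lam_gt_2 lam_lt_alpha_minus_1 beta inner_gf_nonneg
  by (intro add_nonneg_nonneg mult_nonneg_nonneg) auto

lemma gradient_terms_nonpos:
  assumes t: "t\<^sub>1 \<le> t"
  shows "(2 * t - \<gamma>) * F t - lam * (t - \<beta>) * (gf (x t) \<bullet> (x t - xs))
    + (lam - 2) / 2 * (t * (gf (x t) \<bullet> (x t - xs))) \<le> 0"
proof -
  define a where "a = gf (x t) \<bullet> (x t - xs)"
  have t_pos: "0 < t" by (rule beyond_t\<^sub>1(1)[OF t])
  have "2 * lam * \<beta> / (lam - 2) \<le> t" using t t\<^sub>1_ge(3) by linarith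
  then have "2 * lam * \<beta> \<le> t * (lam - 2)"
    using lam_gt_2 by (simp add: pos_divide_le_eq)
  then have "(2 * t - lam * (t - \<beta>) + (lam - 2) / 2 * t) * a \<le> 0"
    using inner_gf_nonneg[of t] by (intro mult_nonpos_nonneg) (auto simp: a_def field_simps)
  moreover have "(2 * t - \<gamma>) * F t \<le> 2 * t * a"
    using \<gamma>_pos F_nonneg[of t] F_le_inner_gf[of t] t_pos unfolding a_def
    by (smt (verit) mult_left_mono mult_right_mono)
  ultimately show ?thesis
    unfolding a_def[symmetric] by (simp add: algebra_simps)
qed

lemma error_terms_le:
  assumes t: "t\<^sub>1 \<le> t" and C: "\<And>s. t0 \<le> s \<Longrightarrow> s * norm (e s) \<le> C"
  shows "\<beta> / 4 * (t\<^sup>2 * (gf (x t) \<bullet> gf (x t))) - t * (t - \<gamma>) * \<beta> * (gf (x t) \<bullet> gf (x t))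
    - t * (t - \<gamma>) * \<beta> * (gf (x t) \<bullet> e t) \<le> \<beta> / 2 * C * (t * norm (e t))"
proof -
  note a = beyond_t\<^sub>1(2,3)[OF t]
  have te: "0 \<le> t * norm (e t)" "t * norm (e t) \<le> C"
    using t t\<^sub>1_ge beyond_t\<^sub>1(1)[OF t] by (auto intro: C)
  have "t * (t - \<gamma>) * (norm (e t))\<^sup>2 \<le> t\<^sup>2 * (norm (e t))\<^sup>2"
    using a by (intro mult_right_mono) auto
  then have "t * (t - \<gamma>) * \<beta> / 2 * (e t \<bullet> e t) \<le> \<beta> / 2 * ((t * norm (e t)) * (t * norm (e t)))"
    using beta by (simp add: power2_norm_eq_inner[symmetric] power_mult_distrib)
      (simp add: power2_eq_square algebra_simps)
  also have "\<dots> \<le> \<beta> / 2 * (C * (t * norm (e t)))"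
    using te beta by (intro mult_left_mono mult_right_mono) auto
  also have "\<dots> = \<beta> / 2 * C * (t * norm (e t))" by simp
  finally show ?thesis
    using gradient_error_terms_le[OF a(1), of \<beta> "gf (x t)" "e t"] beta by linarith
qed

lemma cross_terms_le:
  assumes t: "t\<^sub>1 \<le> t"
  shows "- lam * (t - \<beta>) * ((x t - xs) \<bullet> e t) - t * (t - \<gamma>) * (v t \<bullet> e t)
    \<le> t * norm (e t) * (sqrt (4 + 16 * lam\<^sup>2 / \<xi>) * sqrt (E t))"
proof -
  define p where "p = x t - xs"
  note t_pos = beyond_t\<^sub>1(1)[OF t]
  have "- lam * (t - \<beta>) * (p \<bullet> e t) - t * (t - \<gamma>) * (v t \<bullet> e t)
      \<le> t * norm (e t) * (lam * norm p + t * norm (v t))"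
    using beyond_t\<^sub>1(2-4)[OF t] lam_gt_2 beta
    by (intro perturbation_cross_terms_le) (auto simp: abs_le_iff intro: order_trans[rotated])
  also have "lam * norm p + t * norm (v t) \<le> sqrt (4 + 16 * lam\<^sup>2 / \<xi>) * sqrt (E t)"
  proof (rule le_sqrt_mult_sqrt_if_squares_le[OF _ _ \<xi>_pos])
    have "t * norm (v t) \<le> norm (lam *\<^sub>R p + t *\<^sub>R v t) + lam * norm p"
      using t_pos lam_gt_2 norm_triangle_ineq4[of "lam *\<^sub>R p + t *\<^sub>R v t" "lam *\<^sub>R p"] by simp
    then show "lam * norm p + t * norm (v t) \<le> norm (lam *\<^sub>R p + t *\<^sub>R v t) + 2 * lam * norm p"
      by linarith
  qed (use E_lower_bounds[OF t] in \<open>auto simp: p_def\<close>)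
  finally show ?thesis using t_pos by (simp add: p_def mult_left_mono)
qed

lemma E'_add_P_le:
  assumes t: "t\<^sub>1 \<le> t" and C: "\<And>s. t0 \<le> s \<Longrightarrow> s * norm (e s) \<le> C"
  shows "E' t + P t \<le> \<beta> / 2 * C * (t * norm (e t))
    + sqrt (4 + 16 * lam\<^sup>2 / \<xi>) * (t * norm (e t)) * sqrt (E t)"
proof -
  \<comment> \<open>the terms in v t \<bullet> v t cancel; this is what fixes the weight \<alpha> - 1 - lam in P\<close>
  have "E' t + P t
      = ((2 * t - \<gamma>) * F t - lam * (t - \<beta>) * (gf (x t) \<bullet> (x t - xs))
          + (lam - 2) / 2 * (t * (gf (x t) \<bullet> (x t - xs))))
      + (\<beta> / 4 * (t\<^sup>2 * (gf (x t) \<bullet> gf (x t))) - t * (t - \<gamma>) * \<beta> * (gf (x t) \<bullet> gf (x t))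
          - t * (t - \<gamma>) * \<beta> * (gf (x t) \<bullet> e t))
      + (- lam * (t - \<beta>) * ((x t - xs) \<bullet> e t) - t * (t - \<gamma>) * (v t \<bullet> e t))"
    by (simp add: E'_def P_def power2_norm_eq_inner algebra_simps)
  then show ?thesis
    using gradient_terms_nonpos[OF t] error_terms_le[OF t C] cross_terms_le[OF t]
    by (simp add: algebra_simps)
qed

lemma continuous_on_v: "continuous_on {t0..} v"
  unfolding v_def[abs_def] by (intro continuous_intros continuous_on_x' continuous_on_gf_x continuous_on_e)

lemma continuous_on_P: "continuous_on {t0..} P"
  unfolding P_def[abs_def]
  by (intro continuous_intros continuous_on_x continuous_on_v continuous_on_gf_x)

lemma weighted_e_integrable_from_t\<^sub>1: "(\<lambda>t. t * norm (e t)) integrable_on {t\<^sub>1..}"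
  using t0_pos
  by (intro nonneg_integrable_on_atLeast_subset[OF _ _ e_int t\<^sub>1_ge(1)] continuous_intros continuous_on_e)
    auto

lemma P_integrable: "P integrable_on {t\<^sub>1..}"
proof -
  obtain C where C: "\<And>t. t0 \<le> t \<Longrightarrow> t * norm (e t) \<le> C" using weighted_e_bounded by blast
  have C_nonneg: "0 \<le> C" using C[of t0] t0_pos by (smt (verit) mult_nonneg_nonneg norm_ge_zero)
  define K where "K = sqrt (4 + 16 * lam\<^sup>2 / \<xi>)"
  have K_nonneg: "0 \<le> K" using \<xi>_pos by (simp add: K_def)
  have sub: "{t\<^sub>1..} \<subseteq> {t0..}" using t\<^sub>1_ge by auto
  have deriv: "(E has_vector_derivative E' t) (at t within {t\<^sub>1..})" if "t\<^sub>1 \<le> t" for t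
    using that t\<^sub>1_ge by (intro has_vector_derivative_within_subset[OF has_vector_derivative_E sub]) auto
  have P_nonneg': "0 \<le> P t" if "t\<^sub>1 \<le> t" for t
    using beyond_t\<^sub>1(1)[OF that] by (intro P_nonneg) simp
  have weighted_e_cont: "continuous_on {t\<^sub>1..} (\<lambda>t. c * (t * norm (e t)))" for c
    by (intro continuous_intros continuous_on_subset[OF continuous_on_e sub])
  have weighted_e_nonneg: "0 \<le> c * (t * norm (e t))" if "0 \<le> c" "t\<^sub>1 \<le> t" for c t
    using that beyond_t\<^sub>1(1)[OF that(2)] by simp
  have weighted_e_int: "(\<lambda>t. c * (t * norm (e t))) integrable_on {t\<^sub>1..}" for c
    using integrable_cmul[OF weighted_e_integrable_from_t\<^sub>1, of c] by simp
  obtain k where "continuous_on {t\<^sub>1..} k" "\<And>t. t\<^sub>1 \<le> t \<Longrightarrow> 0 \<le> k t" "k integrable_on {t\<^sub>1..}"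
    and "\<And>t. t\<^sub>1 \<le> t \<Longrightarrow> E' t + P t \<le> k t"
  proof (rule linear_majorant_if_sqrt_differential_inequality[OF deriv E_nonneg P_nonneg'
        weighted_e_cont _ weighted_e_int weighted_e_cont _ weighted_e_int])
    show "E' t + P t \<le> \<beta> / 2 * C * (t * norm (e t)) + K * (t * norm (e t)) * sqrt (E t)"
      if "t\<^sub>1 \<le> t" for t
      using E'_add_P_le[OF that C] by (simp add: K_def)
  qed (use beta C_nonneg K_nonneg weighted_e_nonneg in auto)
  then show ?thesis
    by (intro integrable_if_dissipation_inequality[OF deriv E_nonneg
          continuous_on_subset[OF continuous_on_P sub] P_nonneg'])
qed

lemma integrable_if_le_P:
  assumes "continuous_on {t0..} h" "\<And>t. t\<^sub>1 \<le> t \<Longrightarrow> 0 \<le> h t" "\<And>t. t\<^sub>1 \<le> t \<Longrightarrow> h t \<le> c * P t"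
  shows "h integrable_on {t0..}"
proof (rule integrable_on_atLeast_extend[OF assms(1) _ t\<^sub>1_ge(1)])
  have "(\<lambda>t. c * P t) integrable_on {t\<^sub>1..}"
    using integrable_cmul[OF P_integrable, of c] by simp
  moreover have "continuous_on {t\<^sub>1..} h"
    using t\<^sub>1_ge(1) by (intro continuous_on_subset[OF assms(1)]) auto
  ultimately show "h integrable_on {t\<^sub>1..}"
    using assms(2,3) by (rule integrable_on_atLeast_dominated[rotated 3])
qed

lemma P_summands_le:
  assumes "0 \<le> t"
  shows "(lam - 2) / 2 * (t * (gf (x t) \<bullet> (x t - xs))) \<le> P t"
    and "(\<alpha> - 1 - lam) * (t * (norm (v t))\<^sup>2) \<le> P t"
    and "\<beta> / 4 * (t\<^sup>2 * (norm (gf (x t)))\<^sup>2) \<le> P t"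
  using assms lam_gt_2 lam_lt_alpha_minus_1 beta inner_gf_nonneg[of t]
  by (auto simp: P_def intro!: mult_nonneg_nonneg)

lemma integrable_inner_gf: "(\<lambda>t. t * (gf (x t) \<bullet> (x t - xs))) integrable_on {t0..}"
proof (rule integrable_if_le_P)
  show "continuous_on {t0..} (\<lambda>t. t * (gf (x t) \<bullet> (x t - xs)))"
    by (intro continuous_intros continuous_on_x continuous_on_gf_x)
  fix t assume t: "t\<^sub>1 \<le> t"
  then have "0 \<le> t" using t\<^sub>1_ge t0_pos by linarith
  then show "0 \<le> t * (gf (x t) \<bullet> (x t - xs))" using inner_gf_nonneg by simp
  show "t * (gf (x t) \<bullet> (x t - xs)) \<le> 2 / (lam - 2) * P t"
    using mult_left_mono[OF P_summands_le(1)[OF \<open>0 \<le> t\<close>], of "2 / (lam - 2)"] lam_gt_2 by simp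
qed

lemma integrable_v: "(\<lambda>t. t * (norm (v t))\<^sup>2) integrable_on {t0..}"
proof (rule integrable_if_le_P)
  show "continuous_on {t0..} (\<lambda>t. t * (norm (v t))\<^sup>2)"
    by (intro continuous_intros continuous_on_v)
  fix t assume t: "t\<^sub>1 \<le> t"
  then have "0 \<le> t" using t\<^sub>1_ge t0_pos by linarith
  then show "0 \<le> t * (norm (v t))\<^sup>2" by simp
  show "t * (norm (v t))\<^sup>2 \<le> 1 / (\<alpha> - 1 - lam) * P t"
    using mult_left_mono[OF P_summands_le(2)[OF \<open>0 \<le> t\<close>], of "1 / (\<alpha> - 1 - lam)"] lam_lt_alpha_minus_1 by simp
qed

lemma integrable_gf_squared: "(\<lambda>t. t\<^sup>2 * (norm (gf (x t)))\<^sup>2) integrable_on {t0..}"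
proof (rule integrable_if_le_P)
  show "continuous_on {t0..} (\<lambda>t. t\<^sup>2 * (norm (gf (x t)))\<^sup>2)"
    by (intro continuous_intros continuous_on_gf_x)
  fix t assume t: "t\<^sub>1 \<le> t"
  then have "0 \<le> t" using t\<^sub>1_ge t0_pos by linarith
  show "0 \<le> t\<^sup>2 * (norm (gf (x t)))\<^sup>2" by simp
  show "t\<^sup>2 * (norm (gf (x t)))\<^sup>2 \<le> 4 / \<beta> * P t"
    using mult_left_mono[OF P_summands_le(3)[OF \<open>0 \<le> t\<close>], of "4 / \<beta>"] beta by simp
qed

lemma integrable_F: "(\<lambda>t. t * F t) integrable_on {t0..}"
proof (rule integrable_on_atLeast_dominated[OF _ _ _ integrable_inner_gf])
  show "continuous_on {t0..} (\<lambda>t. t * F t)"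
    unfolding F_def by (intro continuous_intros continuous_on_f_x)
  fix t assume "t0 \<le> t"
  then have "0 \<le> t" using t0_pos by linarith
  then show "0 \<le> t * F t" "t * F t \<le> t * (gf (x t) \<bullet> (x t - xs))"
    using F_nonneg F_le_inner_gf by (auto intro: mult_left_mono)
qed

lemma t_norm_x'_squared_le:
  assumes t: "t0 \<le> t" and C: "\<And>s. t0 \<le> s \<Longrightarrow> s * norm (e s) \<le> C"
  shows "t * (norm (x' t))\<^sup>2 \<le> 3 * (t * (norm (v t))\<^sup>2) + 3 * \<beta>\<^sup>2 * (t\<^sup>2 * (norm (gf (x t)))\<^sup>2 / t0)
    + 3 * \<beta>\<^sup>2 * (C / t0 * (t * norm (e t)))"
proof -
  have t_pos: "0 < t" using t t0_pos by linarith
  have "x' t = v t + (- \<beta> *\<^sub>R gf (x t)) + (- \<beta> *\<^sub>R e t)" by (simp add: v_def algebra_simps)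
  then have "(norm (x' t))\<^sup>2 \<le> 3 * ((norm (v t))\<^sup>2 + \<beta>\<^sup>2 * (norm (gf (x t)))\<^sup>2 + \<beta>\<^sup>2 * (norm (e t))\<^sup>2)"
    using norm_add3_square_le[of "v t" "- \<beta> *\<^sub>R gf (x t)" "- \<beta> *\<^sub>R e t"]
    by (simp add: power_mult_distrib)
  then have "t * (norm (x' t))\<^sup>2 \<le> 3 * (t * (norm (v t))\<^sup>2) + 3 * \<beta>\<^sup>2 * (t * (norm (gf (x t)))\<^sup>2)
      + 3 * \<beta>\<^sup>2 * (t * (norm (e t))\<^sup>2)"
    using mult_left_mono[of _ _ t] t_pos by (fastforce simp: algebra_simps)
  moreover have "t * (norm (gf (x t)))\<^sup>2 \<le> t\<^sup>2 * (norm (gf (x t)))\<^sup>2 / t0"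
    using t t0_pos by (simp add: field_simps power2_eq_square mult_right_mono)
  moreover have "t * (norm (e t))\<^sup>2 \<le> C / t0 * (t * norm (e t))"
  proof -
    have "t0 * norm (e t) \<le> C" using C[OF t] mult_right_mono[OF t, of "norm (e t)"] by simp
    then have "norm (e t) \<le> C / t0" using t0_pos by (simp add: field_simps)
    then have "(t * norm (e t)) * norm (e t) \<le> (t * norm (e t)) * (C / t0)"
      using t_pos by (intro mult_left_mono) auto
    then show ?thesis by (simp add: power2_eq_square algebra_simps)
  qed
  ultimately show ?thesis
    by (smt (verit) mult_left_mono zero_le_power2 mult_nonneg_nonneg zero_le_numeral)
qed

lemma integrable_x'_squared: "(\<lambda>t. t * (norm (x' t))\<^sup>2) integrable_on {t0..}"
proof -
  obtain C where C: "\<And>t. t0 \<le> t \<Longrightarrow> t * norm (e t) \<le> C" using weighted_e_bounded by blast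
  show ?thesis
  proof (rule integrable_on_atLeast_dominated[OF _ _ t_norm_x'_squared_le[OF _ C]])
    show "continuous_on {t0..} (\<lambda>t. t * (norm (x' t))\<^sup>2)"
      by (intro continuous_intros continuous_on_x')
    show "0 \<le> t * (norm (x' t))\<^sup>2" if "t0 \<le> t" for t
      using that t0_pos by simp
    show "(\<lambda>t. 3 * (t * (norm (v t))\<^sup>2) + 3 * \<beta>\<^sup>2 * (t\<^sup>2 * (norm (gf (x t)))\<^sup>2 / t0)
        + 3 * \<beta>\<^sup>2 * (C / t0 * (t * norm (e t)))) integrable_on {t0..}"
      using integrable_add[OF integrable_add[OF integrable_cmul[OF integrable_v, of 3]
            integrable_cmul[OF integrable_gf_squared, of "3 * \<beta>\<^sup>2 / t0"]]
          integrable_cmul[OF e_int, of "3 * \<beta>\<^sup>2 * C / t0"]]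
      by (simp add: algebra_simps)
  qed
qed

definition W :: "real \<Rightarrow> real" where "W t = t\<^sup>2 * F t + t\<^sup>2 * (norm (x' t))\<^sup>2 / 2"

definition W' :: "real \<Rightarrow> real" where
  "W' t = 2 * t * F t + t\<^sup>2 * (gf (x t) \<bullet> x' t) + t * (norm (x' t))\<^sup>2 + t\<^sup>2 * (x' t \<bullet> x'' t)"

lemma has_vector_derivative_W:
  assumes t: "t0 \<le> t"
  shows "(W has_vector_derivative W' t) (at t within {t0..})"
proof -
  have sq: "((\<lambda>s. s\<^sup>2) has_vector_derivative 2 * t) (at t within {t0..})"
    unfolding has_real_derivative_iff_has_vector_derivative[symmetric]
    by (auto intro!: derivative_eq_intros)
  have F: "(F has_vector_derivative (gf (x t) \<bullet> x' t)) (at t within {t0..})"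
    unfolding F_def[abs_def]
    using has_vector_derivative_diff[OF has_vector_derivative_f_x[OF t] has_vector_derivative_const] by simp
  have W_eq: "W = (\<lambda>s. s\<^sup>2 * F s + s\<^sup>2 * (x' s \<bullet> x' s) / 2)"
    by (simp add: W_def power2_norm_eq_inner fun_eq_iff)
  have deriv: "((\<lambda>s. s\<^sup>2 * F s + s\<^sup>2 * (x' s \<bullet> x' s) / 2) has_vector_derivative
      t\<^sup>2 * (gf (x t) \<bullet> x' t) + 2 * t * F t
      + (t\<^sup>2 * (x' t \<bullet> x'' t + x'' t \<bullet> x' t) + 2 * t * (x' t \<bullet> x' t)) / 2) (at t within {t0..})"
    by (intro has_vector_derivative_add has_vector_derivative_mult[OF sq F] has_vector_derivative_divide
        has_vector_derivative_mult[OF sq] bounded_bilinear.has_vector_derivative[OF bounded_bilinear_inner]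
        x'_deriv[OF t])
  show ?thesis
    unfolding W_eq
    by (rule has_vector_derivative_eq_rhs[OF deriv])
      (simp add: W'_def power2_norm_eq_inner inner_commute algebra_simps)
qed

lemma t_norm_x'_le: "t * norm (x' t) \<le> sqrt 2 * sqrt (W t)"
proof -
  have "(t * norm (x' t))\<^sup>2 \<le> 2 * W t"
    using F_nonneg[of t] by (simp add: W_def power_mult_distrib)
  then show ?thesis by (simp add: real_le_rsqrt real_sqrt_mult[symmetric])
qed

lemma W'_le:
  assumes t: "t0 \<le> t"
  shows "W' t \<le> 2 * (t * F t) + sqrt 2 * (\<beta> * (t * norm (e' t)) + t * norm (e t)) * sqrt (W t)"
proof -
  have t_pos: "0 < t" using t t0_pos by linarith
  define d where "d = w t - e' t"
  have "((\<lambda>s. gf (x s)) has_vector_derivative d) (at t within {t0..})"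
    unfolding d_def using has_vector_derivative_diff[OF w_deriv[OF t] e_deriv[OF t]] by simp
  \<comment> \<open>the monotonicity of the gradient replaces the Hessian of f\<close>
  then have monotone: "0 \<le> x' t \<bullet> d"
    using convex_on_gradient_monotone[OF f_grad f_convex]
    by (intro monotone_along_curve_inner_derivative_nonneg[OF x_deriv[OF t] _
          at_within_atLeast_neq_bot[OF t]])
  have "W' t = 2 * t * F t + (1 - \<alpha>) * t * (norm (x' t))\<^sup>2 - \<beta> * t\<^sup>2 * (x' t \<bullet> d)
      - \<beta> * t\<^sup>2 * (x' t \<bullet> e' t) - t\<^sup>2 * (x' t \<bullet> e t)"
    using t_pos unfolding W'_def x''_eq[OF t] d_def
    by (simp add: inner_add_right inner_diff_right inner_commute[of "x' t" "gf (x t)"] dot_square_norm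
        power2_eq_square algebra_simps)
  also have "\<dots> \<le> 2 * t * F t + (\<beta> * (t * norm (e' t)) + t * norm (e t)) * (t * norm (x' t))"
  proof -
    have "(1 - \<alpha>) * t * (norm (x' t))\<^sup>2 \<le> 0"
      using alpha t_pos by (intro mult_nonpos_nonneg) auto
    moreover have "0 \<le> \<beta> * t\<^sup>2 * (x' t \<bullet> d)"
      using beta monotone by simp
    moreover have "- (\<beta> * t\<^sup>2) * (x' t \<bullet> e' t) \<le> \<beta> * t\<^sup>2 * (norm (x' t) * norm (e' t))"
      using mult_left_mono[OF norm_cauchy_schwarz[of "- x' t" "e' t"], of "\<beta> * t\<^sup>2"] beta by simp
    moreover have "- t\<^sup>2 * (x' t \<bullet> e t) \<le> t\<^sup>2 * (norm (x' t) * norm (e t))"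
      using mult_left_mono[OF norm_cauchy_schwarz[of "- x' t" "e t"], of "t\<^sup>2"] by simp
    ultimately show ?thesis by (simp add: power2_eq_square algebra_simps)
  qed
  also have "\<dots> \<le> 2 * t * F t + (\<beta> * (t * norm (e' t)) + t * norm (e t)) * (sqrt 2 * sqrt (W t))"
    using t_norm_x'_le beta t_pos by (intro add_left_mono mult_left_mono) auto
  finally show ?thesis by (simp add: algebra_simps)
qed

lemma W_div_integrable: "(\<lambda>t. W t / t) integrable_on {t0..}"
proof (rule integrable_eq)
  show "(\<lambda>t. t * F t + 1 / 2 * (t * (norm (x' t))\<^sup>2)) integrable_on {t0..}"
    using integrable_add[OF integrable_F integrable_cmul[OF integrable_x'_squared, of "1 / 2"]] by simp
  show "t * F t + 1 / 2 * (t * (norm (x' t))\<^sup>2) = W t / t" if "t \<in> {t0..}" for t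
    using that t0_pos by (simp add: W_def power2_eq_square field_simps)
qed

lemma W_tendsto_zero: "(W \<longlongrightarrow> 0) at_top"
proof -
  define g where "g t = 2 * (t * F t)" for t
  define h where "h t = sqrt 2 * (\<beta> * (t * norm (e' t)) + t * norm (e t))" for t
  have W_nonneg: "0 \<le> W t" for t using F_nonneg[of t] by (simp add: W_def)
  have g: "continuous_on {t0..} g" "\<And>t. t0 \<le> t \<Longrightarrow> 0 \<le> g t" "g integrable_on {t0..}"
    using t0_pos F_nonneg integrable_cmul[OF integrable_F, of 2] unfolding g_def F_def
    by (auto intro!: continuous_intros continuous_on_f_x)
  have h: "continuous_on {t0..} h" "\<And>t. t0 \<le> t \<Longrightarrow> 0 \<le> h t" "h integrable_on {t0..}"
    using t0_pos beta
      integrable_cmul[OF integrable_add[OF integrable_cmul[OF e'_int, of \<beta>] e_int], of "sqrt 2"]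
    unfolding h_def by (auto intro!: continuous_intros continuous_on_e e'_cont)
  obtain k where k: "continuous_on {t0..} k" "\<And>t. t0 \<le> t \<Longrightarrow> 0 \<le> k t" "k integrable_on {t0..}"
    and W'_le_k: "\<And>t. t0 \<le> t \<Longrightarrow> W' t + 0 \<le> k t"
  proof (rule linear_majorant_if_sqrt_differential_inequality[OF has_vector_derivative_W W_nonneg _ g h])
    show "W' t + 0 \<le> g t + h t * sqrt (W t)" if "t0 \<le> t" for t
      using W'_le[OF that] by (simp add: g_def h_def)
  qed auto
  have "W t \<le> W s + integral {s..t} k" if "t0 \<le> s" "s \<le> t" for s t
    using W'_le_k by (intro le_add_integral_of_derivative_le[OF has_vector_derivative_W _ k(1) that]) auto
  then show ?thesis
    using tendsto_zero_if_increment_le_integral[OF t0_pos _ k(3,2) W_nonneg W_div_integrable] by blast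
qed

lemma t_squared_F_tendsto_zero: "((\<lambda>t. t\<^sup>2 * F t) \<longlongrightarrow> 0) at_top"
proof (rule tendsto_sandwich[OF _ _ tendsto_const W_tendsto_zero])
  show "\<forall>\<^sub>F t in at_top. 0 \<le> t\<^sup>2 * F t" "\<forall>\<^sub>F t in at_top. t\<^sup>2 * F t \<le> W t"
    using F_nonneg by (auto simp: W_def)
qed

lemma t_norm_x'_tendsto_zero: "((\<lambda>t. t * norm (x' t)) \<longlongrightarrow> 0) at_top"
proof (rule tendsto_sandwich[OF _ _ tendsto_const])
  show "\<forall>\<^sub>F t in at_top. 0 \<le> t * norm (x' t)"
    using eventually_ge_at_top[of 0] by eventually_elim simp
  show "\<forall>\<^sub>F t in at_top. t * norm (x' t) \<le> sqrt 2 * sqrt (W t)"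
    using t_norm_x'_le by simp
  show "((\<lambda>t. sqrt 2 * sqrt (W t)) \<longlongrightarrow> 0) at_top"
    using tendsto_mult[OF tendsto_const tendsto_real_sqrt[OF W_tendsto_zero], of "sqrt 2"] by simp
qed

end

theorem theorem5:
  fixes f :: "'a::{real_inner, complete_space} \<Rightarrow> real"
    and gf :: "'a \<Rightarrow> 'a"
    and D2f :: "'a \<Rightarrow> 'a \<Rightarrow>\<^sub>L 'a"
    and e e' :: "real \<Rightarrow> 'a"
    and x x' x'' w :: "real \<Rightarrow> 'a"
    and t0 \<alpha> \<beta> :: real
  assumes t0_pos: "t0 > 0"
    and f_grad: "\<And>y. (f has_derivative (\<lambda>h. gf y \<bullet> h)) (at y)"
    and gf_deriv: "\<And>y. (gf has_derivative blinfun_apply (D2f y)) (at y)"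
    and D2f_cont: "continuous_on UNIV D2f"
    and f_convex: "convex_on UNIV f"
    and argmin_ne: "\<exists>z. \<forall>y. f z \<le> f y"
    and e_deriv: "\<And>t. t \<ge> t0 \<Longrightarrow> (e has_vector_derivative e' t) (at t within {t0..})"
    and e'_cont: "continuous_on {t0..} e'"
    and e_int: "(\<lambda>t. t * norm (e t)) integrable_on {t0..}"
    and e'_int: "(\<lambda>t. t * norm (e' t)) integrable_on {t0..}"
    and alpha: "\<alpha> > 3"
    and beta: "\<beta> > 0"
    and x_deriv: "\<And>t. t \<ge> t0 \<Longrightarrow> (x has_vector_derivative x' t) (at t within {t0..})"
    and x'_deriv: "\<And>t. t \<ge> t0 \<Longrightarrow> (x' has_vector_derivative x'' t) (at t within {t0..})"
    and w_deriv: "\<And>t. t \<ge> t0 \<Longrightarrow>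
        ((\<lambda>s. gf (x s) + e s) has_vector_derivative w t) (at t within {t0..})"
    and ode: "\<And>t. t \<ge> t0 \<Longrightarrow>
        x'' t + (\<alpha> / t) *\<^sub>R x' t + \<beta> *\<^sub>R w t + gf (x t) + e t = 0"
  shows "((\<lambda>t. t\<^sup>2 * (f (x t) - (INF y. f y))) \<longlongrightarrow> 0) at_top
      \<and> (\<lambda>t. t\<^sup>2 * (norm (gf (x t)))\<^sup>2) integrable_on {t0..}
      \<and> (\<lambda>t. t * (f (x t) - (INF y. f y))) integrable_on {t0..}
      \<and> (\<forall>xs. (\<forall>y. f xs \<le> f y) \<longrightarrow>
           (\<lambda>t. t * (gf (x t) \<bullet> (x t - xs))) integrable_on {t0..})
      \<and> (\<lambda>t. t * (norm (x' t))\<^sup>2) integrable_on {t0..}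
      \<and> ((\<lambda>t. t * norm (x' t)) \<longlongrightarrow> 0) at_top"
proof -
  interpret hessian_driven_damping f gf e e' x x' x'' w t0 \<alpha> \<beta>
    using t0_pos f_grad f_convex e_deriv e'_cont e_int e'_int alpha beta x_deriv x'_deriv w_deriv ode
    by unfold_locales
  obtain xs where xs: "\<forall>y. f xs \<le> f y" using argmin_ne by blast
  interpret hessian_driven_damping_minimizer f gf e e' x x' x'' w t0 \<alpha> \<beta> xs
    using xs by unfold_locales
  have inf: "(INF y. f y) = f xs" by (rule cInf_eq_minimum) (use xs in auto)
  have "(\<lambda>t. t * (gf (x t) \<bullet> (x t - xs'))) integrable_on {t0..}" if "\<forall>y. f xs' \<le> f y" for xs'
  proof -
    interpret other: hessian_driven_damping_minimizer f gf e e' x x' x'' w t0 \<alpha> \<beta> xs'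
      using that by unfold_locales
    show ?thesis by (rule other.integrable_inner_gf)
  qed
  then show ?thesis
    using t_squared_F_tendsto_zero integrable_gf_squared integrable_F integrable_x'_squared
      t_norm_x'_tendsto_zero
    unfolding inf F_def by blast
qed

end
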